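(* Fix $\alpha\ge0$. For $\beta>0$ let $f_\beta$, $c_{0,\beta}$, $b_{0,\beta}$, $p_\beta$ and $F_\beta$ be as in the context. Then for every $\sigma\in\mathbb{C}$ with $\Re(\sigma)>0$, $$\lim_{\beta\to0^+}F_\beta(\sigma)=\left(\frac{\alpha\sigma}{2}+\frac14\right)e^{-2\sigma}-\frac12 .$$ Consequently the limiting (square-wave) dispersion relation $\lim_{\beta\to0^+}F_\beta(\sigma)=0$ is equivalent to $e^{2\sigma}=\alpha\sigma+\frac12$.
   Context: Dimensionless Chapman–Jouguet example: for parameters $\alpha\ge0$, $\beta>0$, define for $x\le0$, $u>0$ $$f_\beta(x,u)=\frac{1}{4\left(1+\mathrm{Erf}\!\left[\frac{u^{-\alpha}}{2\sqrt\beta}\right]\right)}\,\frac{1}{\sqrt{4\pi\beta}}\exp\!\left[-\frac{(x+u^{-\alpha})^2}{4\beta}\right],$$ which satisfies $\int_{-\infty}^0 f_\beta(x,u)\,dx=1/8$ for all $u$; the steady shock value is $u_{0s}=1$. Define $c_{0,\beta}(x)=\sqrt{2\int_{-\infty}^x f_\beta(y,1)\,dy}$ (so $c_{0,\beta}(0)=1/2$), $b_{0,\beta}(x)=\frac{\partial f_\beta}{\partial u}(x,1)+\frac{f_\beta(x,1)}{2c_{0,\beta}(x)}$, $p_\beta(x)=\int_x^0 dy/c_{0,\beta}(y)$, and $$F_\beta(\sigma)=\int_{-\infty}^0 b_{0,\beta}(\xi)e^{-\sigma p_\beta(\xi)}\,d\xi-c_{0,\beta}(0),\qquad \Re\sigma>0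 .$$ *)

theory Defs
  imports "HOL-Analysis.Analysis"
begin

definition erf :: "real \<Rightarrow> real" where
  "erf z = 2 / sqrt pi * (LBINT t=0..z. exp (- (t\<^sup>2)))"

definition fCJ :: "real \<Rightarrow> real \<Rightarrow> real \<Rightarrow> real \<Rightarrow> real" where
  "fCJ \<alpha> \<beta> x u =
     1 / (4 * (1 + erf (u powr (-\<alpha>) / (2 * sqrt \<beta>)))) *
     (1 / sqrt (4 * pi * \<beta>)) * exp (- ((x + u powr (-\<alpha>))\<^sup>2) / (4 * \<beta>))"

definition c0CJ :: "real \<Rightarrow> real \<Rightarrow> real \<Rightarrow> real" where
  "c0CJ \<alpha> \<beta> x = sqrt (2 * (LBINT y:{..x}. fCJ \<alpha> \<beta> y 1))"

definition b0CJ :: "real \<Rightarrow> real \<Rightarrow> real \<Rightarrow> real" where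
  "b0CJ \<alpha> \<beta> x = deriv (\<lambda>u. fCJ \<alpha> \<beta> x u) 1 + fCJ \<alpha> \<beta> x 1 / (2 * c0CJ \<alpha> \<beta> x)"

definition pCJ :: "real \<Rightarrow> real \<Rightarrow> real \<Rightarrow> real" where
  "pCJ \<alpha> \<beta> x = (LBINT y=x..0. 1 / c0CJ \<alpha> \<beta> y)"

definition FCJ :: "real \<Rightarrow> real \<Rightarrow> complex \<Rightarrow> complex" where
  "FCJ \<alpha> \<beta> \<sigma> =
     (LBINT \<xi>:{..0}. complex_of_real (b0CJ \<alpha> \<beta> \<xi>) * exp (- \<sigma> * complex_of_real (pCJ \<alpha> \<beta> \<xi>)))
     - complex_of_real (c0CJ \<alpha> \<beta> 0)"

end

theory Submission
  imports Defs "HOL-Probability.Distributions" "HOL-Real_Asymp.Real_Asymp"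
begin

text \<open>
  At \<open>u = 1\<close> the density \<open>f\<^sub>\<beta>(\<cdot>, 1)\<close> is \<open>N\<^sub>\<beta>\<close> times the normal density \<open>G\<^sub>\<beta>\<close> with
  mean \<open>-1\<close> and variance \<open>2\<beta>\<close>; hence \<open>c\<^sub>0 = sqrt (2 N\<^sub>\<beta> \<Phi>\<^sub>\<beta>)\<close> for the distribution
  function \<open>\<Phi>\<^sub>\<beta>\<close> of \<open>G\<^sub>\<beta>\<close>, and \<open>b\<^sub>0 = \<alpha> N\<^sub>\<beta> (8 N\<^sub>\<beta> G\<^sub>\<beta>(0) G\<^sub>\<beta> - G\<^sub>\<beta>') + c\<^sub>0'/2\<close>.
  As \<open>p' = -1/c\<^sub>0\<close>, the factor \<open>E = exp (-\<sigma> p)\<close> satisfies \<open>E' = (\<sigma>/c\<^sub>0) E\<close>, and integrating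
  \<open>(c\<^sub>0 E)'\<close> and \<open>(N\<^sub>\<beta> G\<^sub>\<beta> E)'\<close> over \<open>(-\<infinity>, 0]\<close> expresses \<open>F\<^sub>\<beta>(\<sigma>)\<close> through \<open>c\<^sub>0(0)\<close>,
  \<open>N\<^sub>\<beta> G\<^sub>\<beta>(0)\<close>, \<open>\<integral> G\<^sub>\<beta> E\<close> (of modulus at most 1) and \<open>\<integral> E\<close>.

  As \<open>\<beta> \<rightarrow> 0\<close> the Gaussian concentrates at \<open>-1\<close>: \<open>N\<^sub>\<beta> \<rightarrow> 1/8\<close>, \<open>G\<^sub>\<beta>(0) \<rightarrow> 0\<close>, and by
  Chebyshev's inequality \<open>c\<^sub>0\<close> tends to the square wave equal to \<open>1/2\<close> on \<open>(-1, 0]\<close> and \<open>0\<close>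
  below \<open>-1\<close>. So \<open>p(\<xi>) \<rightarrow> -2\<xi>\<close> on \<open>(-1, 0]\<close> and \<open>p(\<xi>) \<rightarrow> \<infinity>\<close> below \<open>-1\<close>, and dominated
  convergence with \<open>|E(\<xi>)| \<le> exp (\<xi> Re \<sigma>)\<close> gives \<open>\<integral> E \<rightarrow> (1 - exp (-2\<sigma>)) / (2\<sigma>)\<close>.
\<close>

section \<open>The error function\<close>

lemma erf_eq_set_integral: "z \<ge> 0 \<Longrightarrow> erf z = 2 / sqrt pi * (LBINT t:{0..z}. exp (- (t\<^sup>2)))"
  unfolding erf_def using interval_integral_Icc[of 0 z] by (simp add: zero_ereal_def)

lemma erf_nonneg: "z \<ge> 0 \<Longrightarrow> erf z \<ge> 0"
  unfolding erf_eq_set_integral set_lebesgue_integral_def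
  by (auto intro!: mult_nonneg_nonneg integral_nonneg_AE)

lemma tendsto_erf_at_top: "(erf \<longlongrightarrow> 1) at_top"
proof -
  have int: "set_integrable lborel {0..} (\<lambda>t::real. exp (- (t\<^sup>2)))"
    and val: "(LBINT t:{0..}. exp (- (t\<^sup>2))) = sqrt pi / 2"
    using gaussian_moment_0
    by (auto simp: set_integrable_def set_lebesgue_integral_def has_bochner_integral_iff)
  then have "((\<lambda>b. LBINT t:{0..b}. exp (- (t\<^sup>2))) \<longlongrightarrow> sqrt pi / 2) at_top"
    using tendsto_set_lebesgue_integral_at_top[OF _ int] val by simp
  from tendsto_mult[OF tendsto_const this, of "2 / sqrt pi"]
  have "((\<lambda>b. 2 / sqrt pi * (LBINT t:{0..b}. exp (- (t\<^sup>2)))) \<longlongrightarrow> 1) at_top"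
    by simp
  then show ?thesis
    by (rule tendsto_cong[THEN iffD1, rotated])
       (auto simp: eventually_at_top_linorder erf_eq_set_integral intro!: exI[of _ 0])
qed

lemma erf_has_real_derivative_at: "(erf has_real_derivative 2 / sqrt pi * exp (- (z\<^sup>2))) (at z)"
proof -
  let ?I = "{-\<bar>z\<bar>-1..\<bar>z\<bar>+1}"
  have "((\<lambda>u. LBINT t=0..u. exp (- (t\<^sup>2))) has_vector_derivative exp (- (z\<^sup>2))) (at z within ?I)"
    unfolding zero_ereal_def
    by (rule interval_integral_FTC2[of "-\<bar>z\<bar>-1" 0 "\<bar>z\<bar>+1"]) (auto intro!: continuous_intros)
  then have "((\<lambda>u. LBINT t=0..u. exp (- (t\<^sup>2))) has_real_derivative exp (- (z\<^sup>2))) (at z)"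
    by (subst (asm) at_within_interior)
       (auto simp: interior_atLeastAtMost_real has_real_derivative_iff_has_vector_derivative)
  then show ?thesis
    unfolding erf_def[abs_def] by (rule DERIV_cmult)
qed

lemma erf_has_real_derivative [derivative_intros]:
  "(f has_real_derivative f') (at x within S) \<Longrightarrow>
   ((\<lambda>x. erf (f x)) has_real_derivative 2 / sqrt pi * exp (- (f x)\<^sup>2) * f') (at x within S)"
  by (rule DERIV_chain2[OF erf_has_real_derivative_at])

section \<open>Integrals over the negative half-line\<close>

lemma set_integral_atMost_eq_lessThan:
  fixes f :: "real \<Rightarrow> 'a::{banach, second_countable_topology}"
  assumes "f \<in> borel_measurable lborel"
  shows "(LBINT x:{..b}. f x) = (LBINT x:{..<b}. f x)"
  unfolding set_lebesgue_integral_def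
proof (rule integral_cong_AE)
  show "AE x in lborel. indicator {..b} x *\<^sub>R f x = indicator {..<b} x *\<^sub>R f x"
    using AE_lborel_singleton[of b] by eventually_elim (auto simp: indicator_def)
qed (use assms in auto)

lemma set_integral_lessThan_FTC:
  fixes F f :: "real \<Rightarrow> complex"
  assumes "\<And>x. (F has_vector_derivative f x) (at x)" and "\<And>x. isCont f x"
    and "set_integrable lborel {..<b} f" and "(F \<longlongrightarrow> 0) at_bot"
  shows "(LBINT x:{..<b}. f x) = F b"
proof -
  have "isCont F b"
    using assms(1) has_vector_derivative_continuous by blast
  then have "(LBINT x=-\<infinity>..ereal b. f x) = F b - 0"
    using assms
    by (intro interval_integral_FTC_integrable)
       (auto simp: ereal_tendsto_simps1 isCont_def intro: tendsto_mono[OF at_within_le_at])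
  then show ?thesis
    by (simp add: interval_lebesgue_integral_le_eq)
qed

lemma set_integrable_exp_lessThan_0:
  assumes "c > (0::real)"
  shows "set_integrable lborel {..<0} (\<lambda>x. exp (c * x))"
proof -
  have "((\<lambda>x. exp (c * x) / c) has_real_derivative exp (c * x)) (at x)" for x
    using assms by (auto intro!: derivative_eq_intros)
  moreover have "(((\<lambda>x. exp (c * x) / c) \<circ> real_of_ereal) \<longlongrightarrow> 0) (at_right (-\<infinity>))"
    unfolding ereal_tendsto_simps1 using assms by real_asymp
  moreover have "(((\<lambda>x. exp (c * x) / c) \<circ> real_of_ereal) \<longlongrightarrow> exp (c * 0) / c) (at_left (ereal 0))"
    unfolding ereal_tendsto_simps1 using assms by (intro tendsto_intros) auto
  ultimately show ?thesis
    using interval_integral_FTC_nonneg[of "-\<infinity>" "ereal 0" "\<lambda>x. exp (c * x) / c" "\<lambda>x. exp (c * x)"]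
    by simp
qed

lemma set_integral_exp_Ioo:
  fixes c :: complex
  assumes "c \<noteq> 0"
  shows "(LBINT x:{-1<..<0::real}. exp (c * x)) = (1 - exp (- c)) / c"
proof -
  have "((\<lambda>x. exp (c * of_real x) / c) has_vector_derivative exp (c * x)) (at x within S)"
    for x :: real and S
    using assms
    by (intro has_vector_derivative_real_field) (auto intro!: derivative_eq_intros)
  then have "(LBINT x=ereal (-1)..ereal 0. exp (c * x)) = exp (c * of_real 0) / c - exp (c * of_real (-1)) / c"
    by (intro interval_integral_FTC_finite continuous_intros)
  then show ?thesis
    by (simp add: interval_lebesgue_integral_le_eq diff_divide_distrib)
qed

lemma set_integrable_mult_norm_le_1:
  fixes g :: "real \<Rightarrow> real" and h :: "real \<Rightarrow> complex"
  assumes "set_integrable lborel A g" and "h \<in> borel_measurable borel"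
    and "\<And>x. x \<in> A \<Longrightarrow> norm (h x) \<le> 1"
  shows "set_integrable lborel A (\<lambda>x. complex_of_real (g x) * h x)"
proof (rule set_integrable_bound[OF assms(1)])
  have "(\<lambda>x. indicator A x * g x) \<in> borel_measurable borel"
    using assms(1) by (auto simp: set_integrable_def dest: borel_measurable_integrable)
  then have "(\<lambda>x. complex_of_real (indicator A x * g x) * h x) \<in> borel_measurable borel"
    using assms(2) by measurable
  then show "set_borel_measurable lborel A (\<lambda>x. complex_of_real (g x) * h x)"
    unfolding set_borel_measurable_def by (simp add: scaleR_conv_of_real mult.assoc)
  show "AE x in lborel. x \<in> A \<longrightarrow> norm (complex_of_real (g x) * h x) \<le> norm (g x)"
    using assms(3) by (auto simp: norm_mult intro!: mult_left_le)
qed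

section \<open>The profile for fixed \<open>\<beta>\<close>\<close>

text \<open>
  In the notation of the paper, \<open>cj_amp \<beta>\<close> is the normalising factor \<open>N\<^sub>\<beta>\<close> with
  \<open>f\<^sub>\<beta>(x, 1) = N\<^sub>\<beta> G\<^sub>\<beta>(x)\<close>, and \<open>sound_speed\<close>, \<open>travel_time\<close>, \<open>wave \<sigma>\<close> are \<open>c\<^sub>0\<^sub>,\<^sub>\<beta>\<close>,
  \<open>p\<^sub>\<beta>\<close> and \<open>exp (-\<sigma> p\<^sub>\<beta>)\<close>; primed names are \<open>x\<close>-derivatives.
\<close>

definition gauss :: "real \<Rightarrow> real \<Rightarrow> real" where
  "gauss \<beta> = normal_density (-1) (sqrt (2 * \<beta>))"

definition gauss' :: "real \<Rightarrow> real \<Rightarrow> real" where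
  "gauss' \<beta> y = - (y + 1) / (2 * \<beta>) * gauss \<beta> y"

definition gauss_cdf :: "real \<Rightarrow> real \<Rightarrow> real" where
  "gauss_cdf \<beta> x = (LBINT y:{..x}. gauss \<beta> y)"

definition cj_amp :: "real \<Rightarrow> real" where
  "cj_amp \<beta> = 1 / (4 * (1 + erf (1 / (2 * sqrt \<beta>))))"

definition sound_speed :: "real \<Rightarrow> real \<Rightarrow> real" where
  "sound_speed \<beta> x = sqrt (2 * cj_amp \<beta> * gauss_cdf \<beta> x)"

definition sound_speed' :: "real \<Rightarrow> real \<Rightarrow> real" where
  "sound_speed' \<beta> x = cj_amp \<beta> * gauss \<beta> x / sound_speed \<beta> x"

definition travel_time :: "real \<Rightarrow> real \<Rightarrow> real" where
  "travel_time \<beta> \<xi> = (LBINT y=\<xi>..0. 1 / sound_speed \<beta> y)"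

definition wave :: "complex \<Rightarrow> real \<Rightarrow> real \<Rightarrow> complex" where
  "wave \<sigma> \<beta> \<xi> = exp (- \<sigma> * travel_time \<beta> \<xi>)"

lemma gauss_nonneg: "0 \<le> gauss \<beta> y"
  by (simp add: gauss_def)

lemma gauss_measurable [measurable]: "gauss \<beta> \<in> borel_measurable borel"
  by (simp add: gauss_def)

lemma gauss'_measurable [measurable]: "gauss' \<beta> \<in> borel_measurable borel"
  unfolding gauss'_def[abs_def] by measurable

lemma gauss_cdf_nonneg: "0 \<le> gauss_cdf \<beta> x"
  unfolding gauss_cdf_def set_lebesgue_integral_def
  by (auto intro!: integral_nonneg_AE simp: gauss_nonneg)

lemma tendsto_cj_amp: "(cj_amp \<longlongrightarrow> 1/8) (at_right 0)"
proof -
  have "filterlim (\<lambda>\<beta>::real. 1 / (2 * sqrt \<beta>)) at_top (at_right 0)"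
    by real_asymp
  then have "((\<lambda>\<beta>. erf (1 / (2 * sqrt \<beta>))) \<longlongrightarrow> 1) (at_right 0)"
    using tendsto_erf_at_top filterlim_compose by blast
  then have "(cj_amp \<longlongrightarrow> 1 / (4 * (1 + 1))) (at_right 0)"
    unfolding cj_amp_def[abs_def] by (intro tendsto_intros) auto
  then show ?thesis by simp
qed

context
  fixes \<beta> :: real
  assumes \<beta>: "\<beta> > 0"
begin

lemma gauss_eq: "gauss \<beta> y = exp (- ((y + 1)\<^sup>2) / (4 * \<beta>)) / sqrt (4 * pi * \<beta>)"
  using \<beta> unfolding gauss_def normal_density_def by (simp add: power2_eq_square)

lemma gauss_pos: "0 < gauss \<beta> y"
  unfolding gauss_def using \<beta> by (simp add: normal_density_pos)

lemma integral_gauss: "(\<integral>y. gauss \<beta> y \<partial>lborel) = 1"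
  unfolding gauss_def using \<beta> by (simp add: integral_normal_density)

lemma set_integrable_gauss: "A \<in> sets borel \<Longrightarrow> set_integrable lborel A (gauss \<beta>)"
  unfolding set_integrable_def gauss_def
  using \<beta> by (intro integrable_mult_indicator integrable_normal_density) auto

lemma gauss_has_real_derivative: "(gauss \<beta> has_real_derivative gauss' \<beta> y) (at y)"
proof -
  define s where "s = sqrt (4 * pi * \<beta>)"
  have "s > 0" "gauss \<beta> = (\<lambda>y. exp (- ((y + 1)\<^sup>2) / (4 * \<beta>)) / s)"
    using \<beta> gauss_eq by (auto simp: s_def)
  then show ?thesis
    using \<beta> by (auto intro!: derivative_eq_intros simp: gauss'_def field_simps power2_eq_square)
qed

lemma isCont_gauss: "isCont (gauss \<beta>) y"
  using gauss_has_real_derivative DERIV_isCont by blast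

lemma tendsto_gauss_at_bot: "(gauss \<beta> \<longlongrightarrow> 0) at_bot"
  using \<beta> unfolding gauss_eq[abs_def] by real_asymp

lemma set_integrable_gauss': "set_integrable lborel A (gauss' \<beta>)" if "A \<in> sets borel"
proof -
  have "integrable lborel (\<lambda>y. gauss \<beta> y * \<bar>y - (-1)\<bar> ^ 1)"
    unfolding gauss_def using \<beta> by (intro integrable_normal_moment_abs) auto
  moreover have "\<bar>gauss' \<beta> y\<bar> = gauss \<beta> y * \<bar>y - (-1)\<bar> ^ 1 / (2 * \<beta>)" for y
    using \<beta> gauss_nonneg[of \<beta> y] by (simp add: gauss'_def abs_mult abs_minus_commute add.commute)
  ultimately have "integrable lborel (\<lambda>y. \<bar>gauss' \<beta> y\<bar>)"
    by simp
  then have "integrable lborel (gauss' \<beta>)"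
    by (subst (asm) integrable_abs_iff) (auto simp: gauss'_def)
  then show ?thesis
    unfolding set_integrable_def using that by (intro integrable_mult_indicator) auto
qed

lemma set_integral_gauss_mono:
  assumes "A \<subseteq> B" "A \<in> sets borel" "B \<in> sets borel"
  shows "(LBINT y:A. gauss \<beta> y) \<le> (LBINT y:B. gauss \<beta> y)"
  unfolding set_lebesgue_integral_def
  using assms set_integrable_gauss gauss_nonneg
  by (intro integral_mono) (auto simp: set_integrable_def split: split_indicator)

text \<open>Chebyshev's inequality, \<open>gauss \<beta>\<close> having variance \<open>2 \<beta>\<close>.\<close>
lemma gauss_tail_le:
  assumes "t > 0"
  shows "(LBINT y:{y. t \<le> \<bar>y + 1\<bar>}. gauss \<beta> y) \<le> 2 * \<beta> / t\<^sup>2"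
proof -
  have moment: "has_bochner_integral lborel (\<lambda>y. gauss \<beta> y * (y + 1)\<^sup>2 / t\<^sup>2) (2 * \<beta> / t\<^sup>2)"
  proof -
    have "has_bochner_integral lborel (\<lambda>y. gauss \<beta> y * (y - (-1)) ^ (2 * 1))
            (fact (2 * 1) / ((2 / (sqrt (2 * \<beta>))\<^sup>2) ^ 1 * fact 1))"
      unfolding gauss_def using \<beta> by (intro normal_moment_even) auto
    then show ?thesis
      using \<beta> by (auto dest: has_bochner_integral_divide_zero[where c = "t\<^sup>2"])
  qed
  have "indicator {y. t \<le> \<bar>y + 1\<bar>} y * gauss \<beta> y \<le> gauss \<beta> y * (y + 1)\<^sup>2 / t\<^sup>2" for y
  proof (cases "t \<le> \<bar>y + 1\<bar>")
    case True
    then have "1 \<le> (y + 1)\<^sup>2 / t\<^sup>2"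
      using assms by (metis abs_le_square_iff abs_of_pos le_divide_eq_1_pos zero_less_power)
    then show ?thesis
      using True mult_left_mono[OF _ gauss_nonneg] by fastforce
  qed (simp add: gauss_nonneg)
  then have "(LBINT y:{y. t \<le> \<bar>y + 1\<bar>}. gauss \<beta> y) \<le> (\<integral>y. gauss \<beta> y * (y + 1)\<^sup>2 / t\<^sup>2 \<partial>lborel)"
    unfolding set_lebesgue_integral_def
    using integrable.intros[OF moment] set_integrable_gauss[of "{y. t \<le> \<bar>y + 1\<bar>}"]
    by (intro integral_mono) (auto simp: set_integrable_def)
  then show ?thesis
    by (simp only: has_bochner_integral_integral_eq[OF moment])
qed

lemma gauss_cdf_le_1: "gauss_cdf \<beta> x \<le> 1"
  using set_integral_gauss_mono[of "{..x}" UNIV] integral_gauss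
  by (simp add: gauss_cdf_def set_lebesgue_integral_def)

lemma gauss_cdf_le_tail:
  assumes "x < -1"
  shows "gauss_cdf \<beta> x \<le> 2 * \<beta> / (x + 1)\<^sup>2"
proof -
  have "gauss_cdf \<beta> x \<le> (LBINT y:{y. - (x + 1) \<le> \<bar>y + 1\<bar>}. gauss \<beta> y)"
    unfolding gauss_cdf_def by (rule set_integral_gauss_mono) auto
  also have "\<dots> \<le> 2 * \<beta> / (- (x + 1))\<^sup>2"
    using gauss_tail_le[of "- (x + 1)"] assms by simp
  also have "\<dots> = 2 * \<beta> / (x + 1)\<^sup>2"
    by (simp only: power2_minus)
  finally show ?thesis .
qed

lemma gauss_cdf_ge:
  assumes "x > -1"
  shows "1 - 2 * \<beta> / (x + 1)\<^sup>2 \<le> gauss_cdf \<beta> x"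
proof -
  have "{..x} \<union> {x<..} = UNIV"
    by auto
  then have "1 = (LBINT y:{..x} \<union> {x<..}. gauss \<beta> y)"
    using integral_gauss by (simp add: set_lebesgue_integral_def)
  also have "\<dots> = gauss_cdf \<beta> x + (LBINT y:{x<..}. gauss \<beta> y)"
    unfolding gauss_cdf_def by (rule set_integral_Un) (auto intro!: set_integrable_gauss)
  also have "(LBINT y:{x<..}. gauss \<beta> y) \<le> (LBINT y:{y. x + 1 \<le> \<bar>y + 1\<bar>}. gauss \<beta> y)"
    by (rule set_integral_gauss_mono) auto
  also have "\<dots> \<le> 2 * \<beta> / (x + 1)\<^sup>2"
    using gauss_tail_le[of "x + 1"] assms by simp
  finally show ?thesis by simp
qed

lemma gauss_cdf_split:
  assumes "a \<le> b"
  shows "gauss_cdf \<beta> b = gauss_cdf \<beta> a + (LBINT y=a..b. gauss \<beta> y)"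
proof -
  have "{..b} = {..a} \<union> {a<..b}"
    using assms by auto
  then have "gauss_cdf \<beta> b = (LBINT y:{..a} \<union> {a<..b}. gauss \<beta> y)"
    unfolding gauss_cdf_def by simp
  also have "\<dots> = gauss_cdf \<beta> a + (LBINT y:{a<..b}. gauss \<beta> y)"
    unfolding gauss_cdf_def by (rule set_integral_Un) (auto intro!: set_integrable_gauss \<beta>)
  finally show ?thesis
    using assms by (simp add: interval_integral_Ioc)
qed

lemma gauss_cdf_has_real_derivative: "(gauss_cdf \<beta> has_real_derivative gauss \<beta> x) (at x)"
proof -
  have "continuous_on {x-1..x+1} (gauss \<beta>)"
    using isCont_gauss by (simp add: continuous_at_imp_continuous_on)
  then have "((\<lambda>u. LBINT y=x-1..u. gauss \<beta> y) has_vector_derivative gauss \<beta> x) (at x within {x-1..x+1})"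
    by (intro interval_integral_FTC2) auto
  then have "((\<lambda>u. gauss_cdf \<beta> (x - 1) + (LBINT y=x-1..u. gauss \<beta> y)) has_vector_derivative gauss \<beta> x)
               (at x within {x-1..x+1})"
    using has_vector_derivative_add[OF has_vector_derivative_const] by fastforce
  then have "(gauss_cdf \<beta> has_vector_derivative gauss \<beta> x) (at x within {x-1..x+1})"
    by (rule has_vector_derivative_transform[rotated 2]) (auto simp: gauss_cdf_split)
  then show ?thesis
    by (subst (asm) at_within_interior) (auto simp: has_real_derivative_iff_has_vector_derivative)
qed

lemma gauss_cdf_pos: "0 < gauss_cdf \<beta> x"
proof -
  have "gauss_cdf \<beta> (x - 1) < gauss_cdf \<beta> x"
    by (rule DERIV_pos_imp_increasing) (use gauss_cdf_has_real_derivative gauss_pos in auto)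
  then show ?thesis
    using gauss_cdf_nonneg[of \<beta> "x - 1"] by linarith
qed

lemma gauss_cdf_mono: "a \<le> b \<Longrightarrow> gauss_cdf \<beta> a \<le> gauss_cdf \<beta> b"
  by (rule DERIV_nonneg_imp_nondecreasing) (use gauss_cdf_has_real_derivative gauss_nonneg in auto)

lemma tendsto_gauss_cdf_at_bot: "(gauss_cdf \<beta> \<longlongrightarrow> 0) at_bot"
proof (rule tendsto_sandwich[of "\<lambda>_. 0" _ _ "\<lambda>x. 2 * \<beta> / (x + 1)\<^sup>2"])
  show "\<forall>\<^sub>F x in at_bot. gauss_cdf \<beta> x \<le> 2 * \<beta> / (x + 1)\<^sup>2"
    using gauss_cdf_le_tail by (auto simp: eventually_at_bot_linorder intro!: exI[of _ "-2"])
  show "((\<lambda>x. 2 * \<beta> / (x + 1)\<^sup>2) \<longlongrightarrow> 0) at_bot"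
    by real_asymp
qed (simp_all add: gauss_cdf_nonneg)

lemma cj_amp_pos: "0 < cj_amp \<beta>"
  unfolding cj_amp_def using erf_nonneg[of "1 / (2 * sqrt \<beta>)"] \<beta> by auto

lemma cj_amp_le: "cj_amp \<beta> \<le> 1/4"
  unfolding cj_amp_def using erf_nonneg[of "1 / (2 * sqrt \<beta>)"] \<beta> by (auto simp: field_simps)

lemma fCJ_at_1: "fCJ \<alpha> \<beta> x 1 = cj_amp \<beta> * gauss \<beta> x"
  using \<beta> by (simp add: fCJ_def cj_amp_def gauss_eq)

lemma c0CJ_eq_sound_speed: "c0CJ \<alpha> \<beta> = sound_speed \<beta>"
  by (auto simp: c0CJ_def sound_speed_def gauss_cdf_def fCJ_at_1)

lemma sound_speed_pos: "0 < sound_speed \<beta> x"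
  unfolding sound_speed_def using cj_amp_pos gauss_cdf_pos by auto

lemma sound_speed_le_1: "sound_speed \<beta> x \<le> 1"
proof -
  have "2 * cj_amp \<beta> * gauss_cdf \<beta> x \<le> 2 * (1/4) * 1"
    using cj_amp_le cj_amp_pos gauss_cdf_le_1 gauss_cdf_nonneg
    by (intro mult_mono) auto
  then show ?thesis
    unfolding sound_speed_def by simp
qed

lemma sound_speed_mono: "a \<le> b \<Longrightarrow> sound_speed \<beta> a \<le> sound_speed \<beta> b"
  unfolding sound_speed_def using gauss_cdf_mono cj_amp_pos by (auto intro!: mult_left_mono)

lemma sound_speed_has_real_derivative: "(sound_speed \<beta> has_real_derivative sound_speed' \<beta> x) (at x)"
proof -
  have "0 < 2 * cj_amp \<beta> * gauss_cdf \<beta> x"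
    using cj_amp_pos gauss_cdf_pos by auto
  then show ?thesis
    unfolding sound_speed_def[abs_def]
    by (auto intro!: derivative_eq_intros gauss_cdf_has_real_derivative
             simp: sound_speed'_def sound_speed_def field_simps)
qed

lemma isCont_sound_speed: "isCont (sound_speed \<beta>) x"
  using sound_speed_has_real_derivative DERIV_isCont by blast

lemma sound_speed'_nonneg: "0 \<le> sound_speed' \<beta> x"
  unfolding sound_speed'_def
  using cj_amp_pos gauss_nonneg sound_speed_pos by (intro divide_nonneg_pos mult_nonneg_nonneg) auto

lemma isCont_sound_speed': "isCont (sound_speed' \<beta>) x"
  unfolding sound_speed'_def[abs_def] using sound_speed_pos[of x]
  by (auto intro!: continuous_intros isCont_sound_speed isCont_gauss \<beta>)

lemma tendsto_sound_speed_at_bot: "(sound_speed \<beta> \<longlongrightarrow> 0) at_bot"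
  unfolding sound_speed_def[abs_def]
  using tendsto_real_sqrt[OF tendsto_mult_right_zero[OF tendsto_gauss_cdf_at_bot]] by simp

lemma set_integrable_sound_speed': "set_integrable lborel {..<0} (sound_speed' \<beta>)"
proof -
  have "((sound_speed \<beta> \<circ> real_of_ereal) \<longlongrightarrow> 0) (at_right (-\<infinity>))"
    unfolding ereal_tendsto_simps1 by (rule tendsto_sound_speed_at_bot)
  moreover have "((sound_speed \<beta> \<circ> real_of_ereal) \<longlongrightarrow> sound_speed \<beta> 0) (at_left (ereal 0))"
    unfolding ereal_tendsto_simps1
    using isCont_sound_speed by (auto simp: isCont_def intro: tendsto_mono[OF at_within_le_at])
  ultimately show ?thesis
    using interval_integral_FTC_nonneg[of "-\<infinity>" "ereal 0" "sound_speed \<beta>" "sound_speed' \<beta>"]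
      sound_speed_has_real_derivative isCont_sound_speed' sound_speed'_nonneg
    by simp
qed

lemma pCJ_eq_travel_time: "pCJ \<alpha> \<beta> = travel_time \<beta>"
  by (auto simp: pCJ_def travel_time_def c0CJ_eq_sound_speed)

lemma travel_time_0: "travel_time \<beta> 0 = 0"
  by (simp add: travel_time_def zero_ereal_def)

lemma travel_time_has_real_derivative:
  "(travel_time \<beta> has_real_derivative - 1 / sound_speed \<beta> \<xi>) (at \<xi>)"
proof -
  let ?I = "{-\<bar>\<xi>\<bar>-1..\<bar>\<xi>\<bar>+1}"
  have "continuous_on ?I (\<lambda>y. 1 / sound_speed \<beta> y)"
    using isCont_sound_speed sound_speed_pos
    by (intro continuous_at_imp_continuous_on ballI continuous_intros) (auto simp: less_imp_neq[symmetric])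
  then have "((\<lambda>u. LBINT y=0..u. 1 / sound_speed \<beta> y) has_vector_derivative 1 / sound_speed \<beta> \<xi>)
               (at \<xi> within ?I)"
    unfolding zero_ereal_def by (intro interval_integral_FTC2) auto
  then have "((\<lambda>u. LBINT y=0..u. 1 / sound_speed \<beta> y) has_real_derivative 1 / sound_speed \<beta> \<xi>) (at \<xi>)"
    by (subst (asm) at_within_interior) (auto simp: has_real_derivative_iff_has_vector_derivative)
  moreover have "travel_time \<beta> = (\<lambda>u. - (LBINT y=0..u. 1 / sound_speed \<beta> y))"
    unfolding travel_time_def by (auto intro!: interval_integral_endpoints_reverse)
  ultimately show ?thesis
    using DERIV_minus by fastforce
qed

text \<open>The integrand \<open>1 / sound_speed\<close> of \<open>travel_time\<close> is decreasing.\<close>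
lemma travel_time_diff_ge:
  assumes "\<xi> \<le> m"
  shows "(m - \<xi>) / sound_speed \<beta> m \<le> travel_time \<beta> \<xi> - travel_time \<beta> m"
proof -
  have "travel_time \<beta> m + m / sound_speed \<beta> m \<le> travel_time \<beta> \<xi> + \<xi> / sound_speed \<beta> m"
  proof (rule DERIV_nonpos_imp_nonincreasing[OF assms])
    fix t assume "\<xi> \<le> t" "t \<le> m"
    then have "- 1 / sound_speed \<beta> t + 1 / sound_speed \<beta> m \<le> 0"
      using sound_speed_mono sound_speed_pos by (simp add: frac_le)
    moreover have "((\<lambda>t. travel_time \<beta> t + t / sound_speed \<beta> m) has_real_derivative
                     - 1 / sound_speed \<beta> t + 1 / sound_speed \<beta> m) (at t)"
      using sound_speed_pos[of m] by (auto intro!: derivative_eq_intros travel_time_has_real_derivative)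
    ultimately show "\<exists>y. ((\<lambda>t. travel_time \<beta> t + t / sound_speed \<beta> m) has_real_derivative y) (at t) \<and> y \<le> 0"
      by blast
  qed
  then show ?thesis
    by (simp add: diff_divide_distrib)
qed

lemma travel_time_diff_le:
  assumes "\<xi> \<le> m"
  shows "travel_time \<beta> \<xi> - travel_time \<beta> m \<le> (m - \<xi>) / sound_speed \<beta> \<xi>"
proof -
  have "travel_time \<beta> \<xi> + \<xi> / sound_speed \<beta> \<xi> \<le> travel_time \<beta> m + m / sound_speed \<beta> \<xi>"
  proof (rule DERIV_nonneg_imp_nondecreasing[OF assms])
    fix t assume "\<xi> \<le> t" "t \<le> m"
    then have "0 \<le> - 1 / sound_speed \<beta> t + 1 / sound_speed \<beta> \<xi>"
      using sound_speed_mono sound_speed_pos by (simp add: frac_le)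
    moreover have "((\<lambda>t. travel_time \<beta> t + t / sound_speed \<beta> \<xi>) has_real_derivative
                     - 1 / sound_speed \<beta> t + 1 / sound_speed \<beta> \<xi>) (at t)"
      using sound_speed_pos[of \<xi>] by (auto intro!: derivative_eq_intros travel_time_has_real_derivative)
    ultimately show "\<exists>y. ((\<lambda>t. travel_time \<beta> t + t / sound_speed \<beta> \<xi>) has_real_derivative y) (at t) \<and> 0 \<le> y"
      by blast
  qed
  then show ?thesis
    by (simp add: diff_divide_distrib)
qed

lemma travel_time_ge_div: "\<xi> \<le> 0 \<Longrightarrow> - \<xi> / sound_speed \<beta> 0 \<le> travel_time \<beta> \<xi>"
  using travel_time_diff_ge[of \<xi> 0] by (simp add: travel_time_0)

lemma travel_time_nonneg:
  assumes "\<xi> \<le> 0"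
  shows "0 \<le> travel_time \<beta> \<xi>"
  using travel_time_ge_div[OF assms] divide_nonneg_pos[of "- \<xi>" "sound_speed \<beta> 0"]
    sound_speed_pos[of 0] assms
  by linarith

lemma travel_time_ge: "\<xi> \<le> 0 \<Longrightarrow> - \<xi> \<le> travel_time \<beta> \<xi>"
proof -
  assume "\<xi> \<le> 0"
  then have "- \<xi> * sound_speed \<beta> 0 \<le> - \<xi>"
    using sound_speed_le_1 by (intro mult_left_le) auto
  then have "- \<xi> \<le> - \<xi> / sound_speed \<beta> 0"
    by (simp only: pos_le_divide_eq[OF sound_speed_pos])
  with travel_time_ge_div[OF \<open>\<xi> \<le> 0\<close>] show ?thesis
    by linarith
qed

lemma wave_has_vector_derivative:
  "(wave \<sigma> \<beta> has_vector_derivative \<sigma> / sound_speed \<beta> \<xi> * wave \<sigma> \<beta> \<xi>) (at \<xi>)"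
proof -
  have "((\<lambda>\<xi>. - \<sigma> * complex_of_real (travel_time \<beta> \<xi>)) has_vector_derivative
          - \<sigma> * complex_of_real (- 1 / sound_speed \<beta> \<xi>)) (at \<xi>)"
    by (intro has_vector_derivative_mult_right has_vector_derivative_of_real
              travel_time_has_real_derivative)
  from field_vector_diff_chain_at[OF this DERIV_exp]
  show ?thesis
    by (simp add: wave_def[abs_def] o_def)
qed

lemma isCont_wave: "isCont (wave \<sigma> \<beta>) x"
  using wave_has_vector_derivative has_vector_derivative_continuous by blast

lemma wave_measurable [measurable]: "wave \<sigma> \<beta> \<in> borel_measurable borel"
  by (intro borel_measurable_continuous_onI continuous_at_imp_continuous_on ballI isCont_wave)

lemma wave_0: "wave \<sigma> \<beta> 0 = 1"
  by (simp add: wave_def travel_time_0)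

lemma norm_wave_le:
  assumes "Re \<sigma> > 0" "\<xi> \<le> 0"
  shows "norm (wave \<sigma> \<beta> \<xi>) \<le> exp (Re \<sigma> * \<xi>)"
  using mult_left_mono[OF travel_time_ge[OF assms(2)], of "Re \<sigma>"] assms(1)
  by (simp add: wave_def)

lemma norm_wave_le_1: "Re \<sigma> > 0 \<Longrightarrow> \<xi> \<le> 0 \<Longrightarrow> norm (wave \<sigma> \<beta> \<xi>) \<le> 1"
  using norm_wave_le[of \<sigma> \<xi>] by (simp add: mult_nonneg_nonpos order.trans)

end

lemma fCJ_has_derivative_at_1:
  assumes "\<beta> > 0"
  shows "((\<lambda>u. fCJ \<alpha> \<beta> x u) has_real_derivative
           \<alpha> * cj_amp \<beta> * (8 * cj_amp \<beta> * gauss \<beta> 0 * gauss \<beta> x - gauss' \<beta> x)) (at 1)"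
proof -
  txt \<open>Naming \<open>sqrt \<beta>\<close>, \<open>1 + erf (\<dots>)\<close> and \<open>sqrt pi\<close> turns the final identity into a rational one.\<close>
  obtain s where s: "s > 0" and \<beta>_eq: "\<beta> = s\<^sup>2"
    using assms by (metis real_sqrt_gt_0_iff real_sqrt_pow2 less_imp_le)
  obtain E where E: "E > 0" "erf (1 / (2 * s)) = E - 1"
  proof
    show "1 + erf (1 / (2 * s)) > 0"
      using erf_nonneg[of "1 / (2 * s)"] s by simp
  qed simp
  obtain q where q: "q > 0" "sqrt pi = q" "pi = q\<^sup>2"
    using pi_gt_zero by (metis real_sqrt_gt_0_iff real_sqrt_pow2 less_imp_le)
  show ?thesis
    unfolding fCJ_def \<beta>_eq
    apply (insert s E q, intro derivative_eq_intros)
    apply (rule refl | simp)+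
    apply (simp add: gauss_eq gauss'_def cj_amp_def real_sqrt_mult power_divide)
    apply (simp add: field_simps power2_eq_square eval_nat_numeral)
    done
qed

section \<open>Integration by parts and the formula for \<open>F\<^sub>\<beta>\<close>\<close>

context
  fixes \<beta> :: real and \<sigma> :: complex
  assumes \<beta>: "\<beta> > 0" and \<sigma>: "Re \<sigma> > 0"
begin

lemma set_integrable_wave: "set_integrable lborel {..<0} (wave \<sigma> \<beta>)"
  using norm_wave_le[OF \<beta> \<sigma>] wave_measurable[OF \<beta>]
  by (intro set_integrable_bound[OF set_integrable_exp_lessThan_0[OF \<sigma>]])
     (auto simp: set_borel_measurable_def)

lemma set_integrable_mult_wave:
  "set_integrable lborel {..<0} g \<Longrightarrow> set_integrable lborel {..<0} (\<lambda>x. complex_of_real (g x) * wave \<sigma> \<beta> x)"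
  using norm_wave_le_1[OF \<beta> \<sigma>] wave_measurable[OF \<beta>]
  by (intro set_integrable_mult_norm_le_1) auto

lemma tendsto_mult_wave_at_bot:
  assumes "(g \<longlongrightarrow> 0) at_bot"
  shows "((\<lambda>x. complex_of_real (g x) * wave \<sigma> \<beta> x) \<longlongrightarrow> 0) at_bot"
proof (rule Lim_null_comparison[OF _ tendsto_rabs_zero[OF assms]])
  show "\<forall>\<^sub>F x in at_bot. norm (complex_of_real (g x) * wave \<sigma> \<beta> x) \<le> \<bar>g x\<bar>"
    using norm_wave_le_1[OF \<beta> \<sigma>]
    by (auto simp: eventually_at_bot_linorder norm_mult intro!: exI[of _ 0] mult_left_le)
qed

lemma set_integral_mult_wave_by_parts:
  assumes g: "\<And>x. (g has_real_derivative g' x) (at x)" and "\<And>x. isCont g' x" and "(g \<longlongrightarrow> 0) at_bot"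
    and int: "set_integrable lborel {..<0} (\<lambda>x. complex_of_real (g' x) * wave \<sigma> \<beta> x
                + \<sigma> * complex_of_real (g x / sound_speed \<beta> x) * wave \<sigma> \<beta> x)"
  shows "(LBINT x:{..<0}. complex_of_real (g' x) * wave \<sigma> \<beta> x
           + \<sigma> * complex_of_real (g x / sound_speed \<beta> x) * wave \<sigma> \<beta> x) = g 0"
proof -
  let ?F = "\<lambda>x. complex_of_real (g x) * wave \<sigma> \<beta> x"
  have "(?F has_vector_derivative
          complex_of_real (g' x) * wave \<sigma> \<beta> x + \<sigma> * complex_of_real (g x / sound_speed \<beta> x) * wave \<sigma> \<beta> x)
        (at x)" for x
    using has_vector_derivative_mult[OF has_vector_derivative_of_real[OF g] wave_has_vector_derivative[OF \<beta>]]
    by (simp add: algebra_simps)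
  moreover have "isCont (\<lambda>x. complex_of_real (g' x) * wave \<sigma> \<beta> x
               + \<sigma> * complex_of_real (g x / sound_speed \<beta> x) * wave \<sigma> \<beta> x) x" for x
    using g[THEN DERIV_isCont] assms(2) sound_speed_pos[OF \<beta>, of x]
    by (auto intro!: continuous_intros isCont_sound_speed isCont_wave \<beta>)
  moreover have "(?F \<longlongrightarrow> 0) at_bot"
    using assms(3) by (rule tendsto_mult_wave_at_bot)
  ultimately have "(LBINT x:{..<0}. complex_of_real (g' x) * wave \<sigma> \<beta> x
           + \<sigma> * complex_of_real (g x / sound_speed \<beta> x) * wave \<sigma> \<beta> x) = ?F 0"
    by (intro set_integral_lessThan_FTC[OF _ _ int])
  then show ?thesis
    by (simp add: wave_0[OF \<beta>])
qed

lemma integral_sound_speed'_wave: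
  "(LBINT x:{..<0}. complex_of_real (sound_speed' \<beta> x) * wave \<sigma> \<beta> x)
     = sound_speed \<beta> 0 - \<sigma> * (LBINT x:{..<0}. wave \<sigma> \<beta> x)"
proof -
  have int1: "set_integrable lborel {..<0} (\<lambda>x. complex_of_real (sound_speed' \<beta> x) * wave \<sigma> \<beta> x)"
    by (rule set_integrable_mult_wave[OF set_integrable_sound_speed'[OF \<beta>]])
  have int2: "set_integrable lborel {..<0} (\<lambda>x. \<sigma> * wave \<sigma> \<beta> x)"
    by (rule set_integrable_mult_right[OF set_integrable_wave])
  have "sound_speed \<beta> x / sound_speed \<beta> x = 1" for x
    using sound_speed_pos[OF \<beta>, of x] by simp
  then have "(LBINT x:{..<0}. complex_of_real (sound_speed' \<beta> x) * wave \<sigma> \<beta> x + \<sigma> * wave \<sigma> \<beta> x)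
               = sound_speed \<beta> 0"
    using set_integral_mult_wave_by_parts[OF sound_speed_has_real_derivative[OF \<beta>]
        isCont_sound_speed'[OF \<beta>] tendsto_sound_speed_at_bot[OF \<beta>]] set_integral_add(1)[OF int1 int2]
    by simp
  then show ?thesis
    by (simp add: set_integral_add(2)[OF int1 int2] eq_diff_eq)
qed

lemma integral_gauss'_wave:
  "(LBINT x:{..<0}. complex_of_real (cj_amp \<beta> * gauss' \<beta> x) * wave \<sigma> \<beta> x)
     = cj_amp \<beta> * gauss \<beta> 0 - \<sigma> * (LBINT x:{..<0}. complex_of_real (sound_speed' \<beta> x) * wave \<sigma> \<beta> x)"
proof -
  let ?g = "\<lambda>x. cj_amp \<beta> * gauss \<beta> x" and ?g' = "\<lambda>x. cj_amp \<beta> * gauss' \<beta> x"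
  have int1: "set_integrable lborel {..<0} (\<lambda>x. complex_of_real (?g' x) * wave \<sigma> \<beta> x)"
    by (intro set_integrable_mult_wave set_integrable_mult_right set_integrable_gauss' \<beta>) simp
  have int2: "set_integrable lborel {..<0} (\<lambda>x. \<sigma> * (complex_of_real (sound_speed' \<beta> x) * wave \<sigma> \<beta> x))"
    by (intro set_integrable_mult_right set_integrable_mult_wave set_integrable_sound_speed' \<beta>)
  have "(?g has_real_derivative ?g' x) (at x)" for x
    by (intro DERIV_cmult gauss_has_real_derivative \<beta>)
  moreover have "isCont ?g' x" for x
    unfolding gauss'_def using \<beta> by (intro continuous_intros isCont_gauss) auto
  moreover have "(?g \<longlongrightarrow> 0) at_bot"
    by (intro tendsto_mult_right_zero tendsto_gauss_at_bot \<beta>)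
  ultimately have "(LBINT x:{..<0}. complex_of_real (?g' x) * wave \<sigma> \<beta> x
                     + \<sigma> * (complex_of_real (sound_speed' \<beta> x) * wave \<sigma> \<beta> x)) = ?g 0"
    using set_integral_mult_wave_by_parts[of ?g ?g'] set_integral_add(1)[OF int1 int2]
    by (simp add: sound_speed'_def mult.assoc)
  then show ?thesis
    by (subst (asm) set_integral_add(2)[OF int1 int2]) (simp add: eq_diff_eq)
qed

lemma norm_integral_gauss_wave_le_1:
  "norm (LBINT x:{..<0}. complex_of_real (gauss \<beta> x) * wave \<sigma> \<beta> x) \<le> 1"
proof -
  have int: "set_integrable lborel {..<0} (\<lambda>x. complex_of_real (gauss \<beta> x) * wave \<sigma> \<beta> x)"
    by (intro set_integrable_mult_wave set_integrable_gauss \<beta>) simp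
  have "norm (LBINT x:{..<0}. complex_of_real (gauss \<beta> x) * wave \<sigma> \<beta> x) \<le> (LBINT x:{..<0}. gauss \<beta> x)"
  proof (rule order.trans[OF set_integral_norm_bound[OF int]])
    show "(LBINT x:{..<0}. norm (complex_of_real (gauss \<beta> x) * wave \<sigma> \<beta> x)) \<le> (LBINT x:{..<0}. gauss \<beta> x)"
      using norm_wave_le_1[OF \<beta> \<sigma>] gauss_nonneg
      by (intro set_integral_mono set_integrable_norm int set_integrable_gauss \<beta>)
         (auto simp: norm_mult intro!: mult_left_le)
  qed
  also have "\<dots> \<le> (LBINT x:UNIV. gauss \<beta> x)"
    by (rule set_integral_gauss_mono[OF \<beta>]) auto
  finally show ?thesis
    using integral_gauss[OF \<beta>] by (simp add: set_lebesgue_integral_def)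
qed

lemma b0CJ_eq:
  "b0CJ \<alpha> \<beta> \<xi> = \<alpha> * cj_amp \<beta> * (8 * cj_amp \<beta> * gauss \<beta> 0 * gauss \<beta> \<xi> - gauss' \<beta> \<xi>)
                  + sound_speed' \<beta> \<xi> / 2"
  using DERIV_imp_deriv[OF fCJ_has_derivative_at_1[OF \<beta>]]
  by (simp add: b0CJ_def fCJ_at_1[OF \<beta>] c0CJ_eq_sound_speed[OF \<beta>] sound_speed'_def)

lemma FCJ_eq:
  "FCJ \<alpha> \<beta> \<sigma> =
     \<alpha> * cj_amp \<beta> * gauss \<beta> 0 * (8 * cj_amp \<beta> * (LBINT x:{..<0}. complex_of_real (gauss \<beta> x) * wave \<sigma> \<beta> x) - 1)
     + (\<alpha> * \<sigma> + 1/2) * (LBINT x:{..<0}. complex_of_real (sound_speed' \<beta> x) * wave \<sigma> \<beta> x)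
     - sound_speed \<beta> 0"
proof -
  let ?X = "LBINT x:{..<0}. complex_of_real (gauss \<beta> x) * wave \<sigma> \<beta> x"
  let ?Y = "LBINT x:{..<0}. complex_of_real (cj_amp \<beta> * gauss' \<beta> x) * wave \<sigma> \<beta> x"
  let ?Z = "LBINT x:{..<0}. complex_of_real (sound_speed' \<beta> x) * wave \<sigma> \<beta> x"
  define a where "a = complex_of_real (8 * \<alpha> * cj_amp \<beta> ^ 2 * gauss \<beta> 0)"
  have intX: "set_integrable lborel {..<0} (\<lambda>x. a * (complex_of_real (gauss \<beta> x) * wave \<sigma> \<beta> x))"
    by (intro set_integrable_mult_right set_integrable_mult_wave set_integrable_gauss \<beta>) simp
  have intY: "set_integrable lborel {..<0} (\<lambda>x. \<alpha> * (complex_of_real (cj_amp \<beta> * gauss' \<beta> x) * wave \<sigma> \<beta> x))"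
    by (intro set_integrable_mult_right set_integrable_mult_wave set_integrable_gauss' \<beta>) simp
  have intZ: "set_integrable lborel {..<0} (\<lambda>x. 1/2 * (complex_of_real (sound_speed' \<beta> x) * wave \<sigma> \<beta> x))"
    by (intro set_integrable_mult_right set_integrable_mult_wave set_integrable_sound_speed' \<beta>)
  have integrand: "complex_of_real (b0CJ \<alpha> \<beta> \<xi>) * exp (- \<sigma> * complex_of_real (pCJ \<alpha> \<beta> \<xi>))
      = a * (complex_of_real (gauss \<beta> \<xi>) * wave \<sigma> \<beta> \<xi>)
        - \<alpha> * (complex_of_real (cj_amp \<beta> * gauss' \<beta> \<xi>) * wave \<sigma> \<beta> \<xi>)
        + 1/2 * (complex_of_real (sound_speed' \<beta> \<xi>) * wave \<sigma> \<beta> \<xi>)" for \<xi>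
    by (simp add: b0CJ_eq pCJ_eq_travel_time[OF \<beta>] wave_def a_def algebra_simps power2_eq_square)
  have "(LBINT \<xi>:{..0}. complex_of_real (b0CJ \<alpha> \<beta> \<xi>) * exp (- \<sigma> * complex_of_real (pCJ \<alpha> \<beta> \<xi>)))
          = a * ?X - \<alpha> * ?Y + 1/2 * ?Z"
    unfolding integrand
    using set_integral_add(2)[OF set_integral_diff(1)[OF intX intY] intZ] set_integral_diff(2)[OF intX intY]
      isCont_gauss[OF \<beta>] isCont_wave[OF \<beta>] isCont_sound_speed'[OF \<beta>] \<beta>
    by (subst set_integral_atMost_eq_lessThan)
       (auto simp: gauss'_def intro!: borel_measurable_continuous_onI continuous_at_imp_continuous_on
               continuous_intros)
  also have "\<dots> = a * ?X - \<alpha> * (cj_amp \<beta> * gauss \<beta> 0 - \<sigma> * ?Z) + 1/2 * ?Z"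
    by (simp only: integral_gauss'_wave)
  finally show ?thesis
    by (simp add: FCJ_def c0CJ_eq_sound_speed[OF \<beta>] a_def algebra_simps power2_eq_square)
qed

end

section \<open>The limit \<open>\<beta> \<rightarrow> 0\<close>\<close>

lemma tendsto_gauss_cdf_below:
  assumes "x < -1"
  shows "((\<lambda>\<beta>. gauss_cdf \<beta> x) \<longlongrightarrow> 0) (at_right 0)"
proof (rule tendsto_sandwich[of "\<lambda>_. 0" _ _ "\<lambda>\<beta>. 2 * \<beta> / (x + 1)\<^sup>2"])
  show "\<forall>\<^sub>F \<beta> in at_right 0. gauss_cdf \<beta> x \<le> 2 * \<beta> / (x + 1)\<^sup>2"
    using eventually_at_right_less[of 0] by eventually_elim (rule gauss_cdf_le_tail[OF _ assms])
  show "((\<lambda>\<beta>. 2 * \<beta> / (x + 1)\<^sup>2) \<longlongrightarrow> 0) (at_right 0)"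
    using assms by (auto intro!: tendsto_eq_intros)
qed (simp_all add: gauss_cdf_nonneg)

lemma tendsto_gauss_cdf_above:
  assumes "x > -1"
  shows "((\<lambda>\<beta>. gauss_cdf \<beta> x) \<longlongrightarrow> 1) (at_right 0)"
proof (rule tendsto_sandwich[of "\<lambda>\<beta>. 1 - 2 * \<beta> / (x + 1)\<^sup>2" _ _ "\<lambda>_. 1"])
  show "\<forall>\<^sub>F \<beta> in at_right 0. 1 - 2 * \<beta> / (x + 1)\<^sup>2 \<le> gauss_cdf \<beta> x"
    using eventually_at_right_less[of 0] by eventually_elim (rule gauss_cdf_ge[OF _ assms])
  show "\<forall>\<^sub>F \<beta> in at_right 0. gauss_cdf \<beta> x \<le> 1"
    using eventually_at_right_less[of 0] by eventually_elim (rule gauss_cdf_le_1)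
  show "((\<lambda>\<beta>. 1 - 2 * \<beta> / (x + 1)\<^sup>2) \<longlongrightarrow> 1) (at_right 0)"
    using assms by (auto intro!: tendsto_eq_intros)
qed simp

lemma tendsto_sound_speed_below:
  assumes "x < -1"
  shows "((\<lambda>\<beta>. sound_speed \<beta> x) \<longlongrightarrow> 0) (at_right 0)"
proof -
  have "((\<lambda>\<beta>. sqrt (2 * cj_amp \<beta> * gauss_cdf \<beta> x)) \<longlongrightarrow> sqrt (2 * (1/8) * 0)) (at_right 0)"
    by (intro tendsto_intros tendsto_cj_amp tendsto_gauss_cdf_below assms)
  then show ?thesis
    by (simp add: sound_speed_def)
qed

lemma tendsto_sound_speed_above:
  assumes "x > -1"
  shows "((\<lambda>\<beta>. sound_speed \<beta> x) \<longlongrightarrow> 1/2) (at_right 0)"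
proof -
  have "((\<lambda>\<beta>. sqrt (2 * cj_amp \<beta> * gauss_cdf \<beta> x)) \<longlongrightarrow> sqrt (2 * (1/8) * 1)) (at_right 0)"
    by (intro tendsto_intros tendsto_cj_amp tendsto_gauss_cdf_above assms)
  then show ?thesis
    by (simp add: sound_speed_def real_sqrt_divide)
qed

lemma tendsto_travel_time:
  assumes "-1 < \<xi>" "\<xi> \<le> 0"
  shows "((\<lambda>\<beta>. travel_time \<beta> \<xi>) \<longlongrightarrow> -2 * \<xi>) (at_right 0)"
proof (rule tendsto_sandwich[of "\<lambda>\<beta>. - \<xi> / sound_speed \<beta> 0" _ _ "\<lambda>\<beta>. - \<xi> / sound_speed \<beta> \<xi>"])
  show "\<forall>\<^sub>F \<beta> in at_right 0. - \<xi> / sound_speed \<beta> 0 \<le> travel_time \<beta> \<xi>"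
    using eventually_at_right_less[of 0] by eventually_elim (rule travel_time_ge_div[OF _ assms(2)])
  show "\<forall>\<^sub>F \<beta> in at_right 0. travel_time \<beta> \<xi> \<le> - \<xi> / sound_speed \<beta> \<xi>"
    using eventually_at_right_less[of 0]
    by eventually_elim (use travel_time_diff_le[OF _ assms(2)] travel_time_0 in simp)
  show "((\<lambda>\<beta>. - \<xi> / sound_speed \<beta> 0) \<longlongrightarrow> -2 * \<xi>) (at_right 0)"
    "((\<lambda>\<beta>. - \<xi> / sound_speed \<beta> \<xi>) \<longlongrightarrow> -2 * \<xi>) (at_right 0)"
    using assms by (auto intro!: tendsto_eq_intros tendsto_sound_speed_above)
qed

lemma tendsto_wave_above:
  assumes "-1 < \<xi>" "\<xi> \<le> 0"
  shows "((\<lambda>\<beta>. wave \<sigma> \<beta> \<xi>) \<longlongrightarrow> exp (2 * \<sigma> * \<xi>)) (at_right 0)"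
  unfolding wave_def using assms
  by (auto intro!: tendsto_eq_intros tendsto_travel_time simp: mult_ac)

lemma tendsto_wave_below:
  assumes "\<xi> < -1" and \<sigma>: "Re \<sigma> > 0"
  shows "((\<lambda>\<beta>. wave \<sigma> \<beta> \<xi>) \<longlongrightarrow> 0) (at_right 0)"
proof -
  define m where "m = (\<xi> - 1) / 2"
  have m: "\<xi> \<le> m" "m < -1" and r: "Re \<sigma> * (m - \<xi>) > 0"
    using assms by (auto simp: m_def)
  have "filterlim (\<lambda>\<beta>. sound_speed \<beta> m) (at_right 0) (at_right 0)"
    using tendsto_sound_speed_below[OF m(2)] eventually_at_right_less[of 0]
    by (auto intro!: tendsto_imp_filterlim_at_right elim: eventually_mono sound_speed_pos)
  then have "filterlim (\<lambda>\<beta>. Re \<sigma> * (m - \<xi>) / sound_speed \<beta> m) at_top (at_right 0)"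
    using filterlim_compose[OF filterlim_tendsto_pos_mult_at_top[OF tendsto_const r filterlim_inverse_at_top_right]]
    by (simp add: divide_inverse)
  then have lim: "((\<lambda>\<beta>. exp (- (Re \<sigma> * (m - \<xi>) / sound_speed \<beta> m))) \<longlongrightarrow> 0) (at_right 0)"
    by (auto intro: filterlim_compose[OF exp_at_bot] simp: filterlim_uminus_at_bot)
  show ?thesis
  proof (rule Lim_null_comparison[OF _ lim])
    show "\<forall>\<^sub>F \<beta> in at_right 0. norm (wave \<sigma> \<beta> \<xi>) \<le> exp (- (Re \<sigma> * (m - \<xi>) / sound_speed \<beta> m))"
      using eventually_at_right_less[of 0]
    proof eventually_elim
      case (elim \<beta>)
      have "(m - \<xi>) / sound_speed \<beta> m \<le> travel_time \<beta> \<xi>"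
        using travel_time_diff_ge[OF elim m(1)] travel_time_nonneg[OF elim, of m] m by linarith
      then have "Re \<sigma> * ((m - \<xi>) / sound_speed \<beta> m) \<le> Re \<sigma> * travel_time \<beta> \<xi>"
        using \<sigma> by (intro mult_left_mono) auto
      then show ?case
        by (simp add: wave_def)
    qed
  qed
qed

lemma tendsto_indicator_wave:
  assumes "Re \<sigma> > 0" and "x \<noteq> -1"
  shows "((\<lambda>\<beta>. indicator {..<0} x *\<^sub>R wave \<sigma> \<beta> x) \<longlongrightarrow> indicator {-1<..<0} x *\<^sub>R exp (2 * \<sigma> * x))
           (at_right 0)"
proof -
  consider "0 \<le> x" | "-1 < x" "x < 0" | "x < -1"
    using assms(2) by linarith
  then show ?thesis
  proof cases
    case 2
    then show ?thesis
      using tendsto_wave_above[of x \<sigma>] by simp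
  next
    case 3
    then show ?thesis
      using tendsto_wave_below[OF _ assms(1)] by simp
  qed simp
qed

lemma tendsto_integral_wave:
  assumes \<sigma>: "Re \<sigma> > 0"
  shows "((\<lambda>\<beta>. LBINT x:{..<0}. wave \<sigma> \<beta> x) \<longlongrightarrow> (1 - exp (- 2 * \<sigma>)) / (2 * \<sigma>)) (at_right 0)"
proof -
  define f where "f x = indicator {-1<..<0} x *\<^sub>R exp (2 * \<sigma> * x)" for x :: real
  define s where "s t x = indicator {..<0} x *\<^sub>R wave \<sigma> (inverse (max 1 t)) x" for t x :: real
  have to_0: "filterlim (\<lambda>t::real. inverse (max 1 t)) (at_right 0) at_top"
  proof (rule filterlim_cong[THEN iffD1, OF refl refl _ filterlim_inverse_at_right_top])
    show "\<forall>\<^sub>F t in at_top. inverse t = inverse (max 1 t :: real)"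
      unfolding eventually_at_top_linorder by (intro exI[of _ 1]) simp
  qed
  have lim: "((\<lambda>t. s t x) \<longlongrightarrow> f x) at_top" if "x \<noteq> -1" for x
    unfolding s_def f_def using filterlim_compose[OF tendsto_indicator_wave[OF \<sigma> that] to_0] .
  have "((\<lambda>t. integral\<^sup>L lborel (s t)) \<longlongrightarrow> integral\<^sup>L lborel f) at_top"
  proof (rule integral_dominated_convergence_at_top[where w = "\<lambda>x. indicator {..<0} x *\<^sub>R exp (Re \<sigma> * x)"])
    show "integrable lborel (\<lambda>x. indicator {..<0} x *\<^sub>R exp (Re \<sigma> * x))"
      using set_integrable_exp_lessThan_0[OF \<sigma>] by (simp add: set_integrable_def)
    show "AE x in lborel. ((\<lambda>t. s t x) \<longlongrightarrow> f x) at_top"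
      using AE_lborel_singleton[of "-1"] by eventually_elim (rule lim)
    show "\<forall>\<^sub>F t in at_top. AE x in lborel. norm (s t x) \<le> indicator {..<0} x *\<^sub>R exp (Re \<sigma> * x)"
      by (intro always_eventually allI AE_I2) (auto simp: s_def indicator_def intro!: norm_wave_le \<sigma>)
    show "s t \<in> borel_measurable lborel" for t
      unfolding s_def by (simp add: wave_measurable)
    show "f \<in> borel_measurable lborel"
      unfolding f_def[abs_def] measurable_lborel2
      by (rule borel_measurable_continuous_on_indicator) (auto intro!: continuous_intros)
  qed
  moreover have "\<forall>\<^sub>F t in at_top. integral\<^sup>L lborel (s t) = (LBINT x:{..<0}. wave \<sigma> (inverse t) x)"
    unfolding eventually_at_top_linorder
    by (intro exI[of _ 1] allI impI) (simp add: s_def[abs_def] set_lebesgue_integral_def max_absorb2)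
  moreover have "integral\<^sup>L lborel f = (1 - exp (- 2 * \<sigma>)) / (2 * \<sigma>)"
    using set_integral_exp_Ioo[of "2 * \<sigma>"] \<sigma> by (force simp: f_def[abs_def] set_lebesgue_integral_def)
  ultimately show ?thesis
    unfolding at_right_to_top filterlim_filtermap by (auto dest: tendsto_cong[THEN iffD1])
qed

lemma tendsto_gauss_at_0: "((\<lambda>\<beta>. gauss \<beta> 0) \<longlongrightarrow> 0) (at_right 0)"
proof -
  have "((\<lambda>\<beta>::real. exp (- 1 / (4 * \<beta>)) / sqrt (4 * pi * \<beta>)) \<longlongrightarrow> 0) (at_right 0)"
    by real_asymp
  moreover have "\<forall>\<^sub>F \<beta> in at_right 0. exp (- 1 / (4 * \<beta>)) / sqrt (4 * pi * \<beta>) = gauss \<beta> 0"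
    using eventually_at_right_less[of 0] by eventually_elim (simp add: gauss_eq)
  ultimately show ?thesis
    by (rule tendsto_cong[THEN iffD1, rotated])
qed

lemma tendsto_integral_sound_speed'_wave:
  assumes \<sigma>: "Re \<sigma> > 0"
  shows "((\<lambda>\<beta>. LBINT x:{..<0}. complex_of_real (sound_speed' \<beta> x) * wave \<sigma> \<beta> x)
           \<longlongrightarrow> exp (- 2 * \<sigma>) / 2) (at_right 0)"
proof -
  have lim: "((\<lambda>\<beta>. sound_speed \<beta> 0 - \<sigma> * (LBINT x:{..<0}. wave \<sigma> \<beta> x))
          \<longlongrightarrow> of_real (1/2) - \<sigma> * ((1 - exp (- 2 * \<sigma>)) / (2 * \<sigma>))) (at_right 0)"
    by (intro tendsto_intros tendsto_integral_wave tendsto_sound_speed_above \<sigma>) simp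
  have val: "of_real (1/2) - \<sigma> * ((1 - exp (- 2 * \<sigma>)) / (2 * \<sigma>)) = exp (- 2 * \<sigma>) / 2"
    using \<sigma> by (subgoal_tac "\<sigma> \<noteq> 0") (auto simp: field_simps)
  have ev: "\<forall>\<^sub>F \<beta> in at_right 0.
      sound_speed \<beta> 0 - \<sigma> * (LBINT x:{..<0}. wave \<sigma> \<beta> x)
        = (LBINT x:{..<0}. complex_of_real (sound_speed' \<beta> x) * wave \<sigma> \<beta> x)"
    using eventually_at_right_less[of 0] by eventually_elim (simp add: integral_sound_speed'_wave \<sigma>)
  show ?thesis
    using tendsto_cong[OF ev] lim unfolding val by blast
qed

lemma tendsto_FCJ_gauss_term:
  assumes \<sigma>: "Re \<sigma> > 0"
  shows "((\<lambda>\<beta>. complex_of_real (\<alpha> * cj_amp \<beta> * gauss \<beta> 0) *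
             (8 * cj_amp \<beta> * (LBINT x:{..<0}. complex_of_real (gauss \<beta> x) * wave \<sigma> \<beta> x) - 1))
           \<longlongrightarrow> 0) (at_right 0)"
proof (rule Lim_null_comparison)
  let ?X = "\<lambda>\<beta>. LBINT x:{..<0}. complex_of_real (gauss \<beta> x) * wave \<sigma> \<beta> x"
  let ?a = "\<lambda>\<beta>. complex_of_real (\<alpha> * cj_amp \<beta> * gauss \<beta> 0)"
  have "((\<lambda>\<beta>. norm (?a \<beta>) * 3) \<longlongrightarrow> norm (of_real (\<alpha> * (1/8) * 0) :: complex) * 3) (at_right 0)"
    by (intro tendsto_intros tendsto_cj_amp tendsto_gauss_at_0)
  then show "((\<lambda>\<beta>. norm (?a \<beta>) * 3) \<longlongrightarrow> 0) (at_right 0)"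
    by simp
  show "\<forall>\<^sub>F \<beta> in at_right 0. norm (?a \<beta> * (8 * cj_amp \<beta> * ?X \<beta> - 1)) \<le> norm (?a \<beta>) * 3"
    using eventually_at_right_less[of 0]
  proof eventually_elim
    case (elim \<beta>)
    have "norm (8 * cj_amp \<beta> * ?X \<beta>) = 8 * cj_amp \<beta> * norm (?X \<beta>)"
      using cj_amp_pos[OF elim] by (simp add: norm_mult)
    also have "\<dots> \<le> 8 * (1/4) * 1"
      using cj_amp_pos[OF elim] cj_amp_le[OF elim] norm_integral_gauss_wave_le_1[OF elim \<sigma>]
      by (intro mult_mono) auto
    finally have "norm (8 * cj_amp \<beta> * ?X \<beta>) \<le> 2"
      by simp
    then show ?case
      by (auto simp: norm_mult intro!: mult_left_mono order.trans[OF norm_triangle_ineq4])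
  qed
qed

lemma tendsto_FCJ:
  assumes \<sigma>: "Re \<sigma> > 0"
  shows "((\<lambda>\<beta>. FCJ \<alpha> \<beta> \<sigma>) \<longlongrightarrow> (\<alpha> * \<sigma> / 2 + 1/4) * exp (- 2 * \<sigma>) - 1/2) (at_right 0)"
proof -
  let ?X = "\<lambda>\<beta>. LBINT x:{..<0}. complex_of_real (gauss \<beta> x) * wave \<sigma> \<beta> x"
  let ?Z = "\<lambda>\<beta>. LBINT x:{..<0}. complex_of_real (sound_speed' \<beta> x) * wave \<sigma> \<beta> x"
  let ?a = "\<lambda>\<beta>. complex_of_real (\<alpha> * cj_amp \<beta> * gauss \<beta> 0)"
  have "((\<lambda>\<beta>. (\<alpha> * \<sigma> + 1/2) * ?Z \<beta> - sound_speed \<beta> 0)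
          \<longlongrightarrow> (\<alpha> * \<sigma> + 1/2) * (exp (- 2 * \<sigma>) / 2) - of_real (1/2)) (at_right 0)"
    by (intro tendsto_intros tendsto_integral_sound_speed'_wave tendsto_sound_speed_above \<sigma>) simp
  from tendsto_add[OF tendsto_FCJ_gauss_term[OF \<sigma>] this]
  have lim: "((\<lambda>\<beta>. ?a \<beta> * (8 * cj_amp \<beta> * ?X \<beta> - 1) + ((\<alpha> * \<sigma> + 1/2) * ?Z \<beta> - sound_speed \<beta> 0))
               \<longlongrightarrow> 0 + ((\<alpha> * \<sigma> + 1/2) * (exp (- 2 * \<sigma>) / 2) - of_real (1/2))) (at_right 0)" .
  have val: "0 + ((\<alpha> * \<sigma> + 1/2) * (exp (- 2 * \<sigma>) / 2) - of_real (1/2))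
               = (\<alpha> * \<sigma> / 2 + 1/4) * exp (- 2 * \<sigma>) - 1/2"
    by (simp add: algebra_simps)
  have ev: "\<forall>\<^sub>F \<beta> in at_right 0.
      ?a \<beta> * (8 * cj_amp \<beta> * ?X \<beta> - 1) + ((\<alpha> * \<sigma> + 1/2) * ?Z \<beta> - sound_speed \<beta> 0) = FCJ \<alpha> \<beta> \<sigma>"
    using eventually_at_right_less[of 0] by eventually_elim (simp add: FCJ_eq \<sigma>)
  show ?thesis
    using tendsto_cong[OF ev] lim unfolding val by blast
qed

lemma dispersion_relation_iff:
  fixes a \<sigma> :: complex
  shows "(a * \<sigma> / 2 + 1/4) * exp (- 2 * \<sigma>) - 1/2 = 0 \<longleftrightarrow> exp (2 * \<sigma>) = a * \<sigma> + 1/2"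
proof -
  define w where "w = exp (2 * \<sigma>)"
  have "w \<noteq> 0" and exp_minus_eq: "exp (- 2 * \<sigma>) = 1 / w"
    by (simp_all add: w_def exp_minus divide_inverse)
  then show ?thesis
    unfolding exp_minus_eq w_def[symmetric] by (auto simp: field_simps) algebra+
qed

theorem mainTheorem5:
  fixes \<alpha> :: real and \<sigma> :: complex
  assumes "\<alpha> \<ge> 0" and "Re \<sigma> > 0"
  shows "((\<lambda>\<beta>. FCJ \<alpha> \<beta> \<sigma>) \<longlongrightarrow>
            (complex_of_real \<alpha> * \<sigma> / 2 + 1/4) * exp (- 2 * \<sigma>) - 1/2) (at_right 0)
     \<and> ((complex_of_real \<alpha> * \<sigma> / 2 + 1/4) * exp (- 2 * \<sigma>) - 1/2 = 0
           \<longleftrightarrow> exp (2 * \<sigma>) = complex_of_real \<alpha> * \<sigma> + 1/2)"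
  using tendsto_FCJ[OF assms(2)] dispersion_relation_iff by blast

end
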